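(* Let $M_1,\dots,M_m$ generate the measured stabilizer group, let $\mathcal C^*$ be the set of nontrivial syndrome classes and, for each class $C$, let $J(C)\subseteq[m]$ be the set of indices of generators anticommuting with the errors of $C$. Suppose real numbers $(X_C)_{C\in\mathcal C^*}$ and $(Y_R)_{R\subseteq[m]}$ satisfy the linear system $$Y_R=\sum_{C\in\mathcal C^*}D_{R,C}X_C\quad\text{for all }R\in\mathcal R,\qquad D_{R,C}=\begin{cases}1&|R\cap J(C)|\text{ odd}\\0&|R\cap J(C)|\text{ even,}\end{cases}$$ where $\mathcal R=\bigcup_{C\in\mathcal C^*}\{R:R\subseteq J(C)\}$ (equivalently, the system $\log\vec\Lambda^{(\mathcal M')}=D'^{(\mathcal M')}\log\vec\nu$ with $X_C=\log\nu_C$, $Y_R=\log\Lambda(\prod_{i\in R}M_i)$, restricted to $\mathcal M'=\bigcup_{C}\{\prod_{i\in J'}M_i:J'\subseteq J(C)\}$). Then for every $C\in\mathcal C^*$, $$X_C=-\sum_{C'\in\mathcal C,\ J(C')\supsetneq J(C)}X_{C'}+\frac{1}{2^{|J(C)|-1}}\sum_{S\subseteq J(C)}(-1)^{|S|-1}Y_S,$$ so that this recursion solves the system.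
   Context: Setting: $n$-qubit Pauli operators without phases; a stabilizer code with measured subgroup $\mathcal M=\langle M_1,\dots,M_m\rangle$; a finite set $\mathcal E_\Gamma$ of local Pauli errors partitioned into syndrome classes according to which generators each error anticommutes with (errors in a class share the same set $J(C)$; distinct classes have distinct sets; the trivial class $C_0$ has $J(C_0)=\emptyset$, and $\mathcal C=\mathcal C^*\cup\{C_0\}$). The row of $D'$ for the stabilizer element $\prod_{i\in R}M_i$ and the column for class $C$ is the binary commutator of that element with any error of $C$, which equals $D_{R,C}$ above. In the application, $\nu_C$ is the learnable transformed eigenvalue of class $C$ and $\Lambda(M)$ the syndrome expectation value of $M$. *)

theory Defs
  imports Complex_Main
begin

definition syndrome_D :: "nat set \<Rightarrow> nat set \<Rightarrow> real" where
  "syndrome_D R JC = (if odd (card (R \<inter> JC)) then 1 else 0)"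

end

theory Submission
  imports Defs
begin

text \<open>Write \<open>D(R, C) = (1 - \<chi>\<^sub>C R)/2\<close> with the character
  \<open>\<chi>\<^sub>C R = (-1)^|R \<inter> J(C)|\<close> of the cube \<open>Pow A\<close>. Then the alternating sum of
  \<open>(-1)^(|R|-1) D(R, C)\<close> over \<open>R \<subseteq> A\<close> is a difference of two character sums: that of
  \<open>R \<mapsto> (-1)^|R - J(C)|\<close>, which is \<open>2^|A|\<close> if \<open>A \<subseteq> J(C)\<close> and \<open>0\<close> otherwise, and that of
  \<open>R \<mapsto> (-1)^|R|\<close>, which vanishes. Taking \<open>A = J(C)\<close>, the alternating sum of the \<open>Y\<close>
  becomes \<open>2^(|J(C)|-1)\<close> times the sum of \<open>X\<close> over all classes whose set contains \<open>J(C)\<close>,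
  and peeling off \<open>C\<close> itself (the sets \<open>J\<close> are distinct) gives the recursion.\<close>

lemma sum_Pow_prod:
  fixes f :: "'a \<Rightarrow> 'b::comm_semiring_1"
  assumes "finite A"
  shows "(\<Sum>B\<in>Pow A. \<Prod>x\<in>B. f x) = (\<Prod>x\<in>A. 1 + f x)"
  using prod_add[OF assms, of f "\<lambda>_. 1"] by (simp add: add.commute)

lemma sum_Pow_neg_one_power_card:
  assumes "finite A" "A \<noteq> {}"
  shows "(\<Sum>B\<in>Pow A. (-1::'a::comm_ring_1) ^ card B) = 0"
proof -
  have "card A > 0"
    using assms by (simp add: card_gt_0_iff)
  then show ?thesis
    using sum_Pow_prod[OF assms(1), of "\<lambda>_. -1::'a"] by (simp add: power_0_left)
qed

lemma neg_one_power_card_diff_eq_prod: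
  assumes "finite B"
  shows "(-1::'a::comm_ring_1) ^ card (B - L) = (\<Prod>x\<in>B. if x \<in> L then 1 else -1)"
  using assms by (simp add: prod.If_cases Collect_mem_eq Diff_eq Int_def)

lemma sum_Pow_neg_one_power_card_diff:
  assumes "finite A"
  shows "(\<Sum>B\<in>Pow A. (-1::'a::comm_ring_1) ^ card (B - L))
           = (if A \<subseteq> L then 2 ^ card A else 0)"
proof -
  have "(\<Sum>B\<in>Pow A. (-1::'a) ^ card (B - L))
          = (\<Sum>B\<in>Pow A. \<Prod>x\<in>B. if x \<in> L then 1 else -1)"
    using assms
    by (intro sum.cong refl neg_one_power_card_diff_eq_prod) (auto intro: finite_subset)
  also have "\<dots> = (\<Prod>x\<in>A. 1 + (if x \<in> L then 1 else -1))"
    by (rule sum_Pow_prod[OF assms])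
  also have "\<dots> = (if A \<subseteq> L then 2 ^ card A else 0)"
  proof (cases "A \<subseteq> L")
    case True
    then have "(\<Prod>x\<in>A. 1 + (if x \<in> L then 1 else -1)) = (\<Prod>x\<in>A. 2::'a)"
      by (intro prod.cong) auto
    with True show ?thesis by simp
  next
    case False
    then show ?thesis
      using assms by (auto intro!: prod_zero)
  qed
  finally show ?thesis .
qed

lemma syndrome_D_eq_parity: "syndrome_D R L = (1 - (-1::real) ^ card (R \<inter> L)) / 2"
  by (simp add: syndrome_D_def)

lemma neg_one_powi_pred: "(-1::'a::division_ring) powi (int n - 1) = - ((-1) ^ n)"
  by (cases n) (simp_all add: power_int_minus)

lemma alternating_syndrome_D:
  assumes "finite R"
  shows "(-1::real) powi (int (card R) - 1) * syndrome_D R L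
           = ((-1) ^ card (R - L) - (-1) ^ card R) / 2"
proof -
  have "(-1::real) ^ card R * (-1) ^ card (R \<inter> L)
          = ((-1) ^ card (R \<inter> L))\<^sup>2 * (-1) ^ card (R - L)"
    by (simp add: card_Int_Diff[OF assms, of L] power_add power2_eq_square)
  also have "\<dots> = (-1) ^ card (R - L)"
    by (simp flip: power_mult)
  finally have parity: "(-1::real) ^ card R * (-1) ^ card (R \<inter> L) = (-1) ^ card (R - L)" .
  show ?thesis
    unfolding neg_one_powi_pred syndrome_D_eq_parity parity[symmetric]
    by (simp add: field_simps)
qed

lemma sum_Pow_alternating_syndrome_D:
  assumes "finite A" "A \<noteq> {}"
  shows "(\<Sum>R\<in>Pow A. (-1::real) powi (int (card R) - 1) * syndrome_D R L)
           = (if A \<subseteq> L then 2 ^ (card A - 1) else 0)"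
proof -
  have "(\<Sum>R\<in>Pow A. (-1::real) powi (int (card R) - 1) * syndrome_D R L)
          = (\<Sum>R\<in>Pow A. ((-1) ^ card (R - L) - (-1) ^ card R) / 2)"
    using assms(1) by (intro sum.cong refl alternating_syndrome_D) (auto intro: finite_subset)
  also have "\<dots> = ((\<Sum>R\<in>Pow A. (-1::real) ^ card (R - L)) - (\<Sum>R\<in>Pow A. (-1) ^ card R)) / 2"
    by (simp add: sum_subtractf flip: sum_divide_distrib)
  also have "\<dots> = (if A \<subseteq> L then 2 ^ card A else 0) / 2"
    by (simp add: sum_Pow_neg_one_power_card_diff sum_Pow_neg_one_power_card assms)
  also have "\<dots> = (if A \<subseteq> L then 2 ^ (card A - 1) else 0)"
    using assms by (cases "card A") auto
  finally show ?thesis .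
qed

lemma alternating_sum_of_syndrome_system:
  fixes X :: "'c \<Rightarrow> real"
  assumes "finite Cs" "finite A" "A \<noteq> {}"
    and system: "\<forall>R\<in>Pow A. Y R = (\<Sum>C\<in>Cs. syndrome_D R (J C) * X C)"
  shows "(\<Sum>R\<in>Pow A. (-1::real) powi (int (card R) - 1) * Y R)
           = 2 ^ (card A - 1) * (\<Sum>C\<in>{C\<in>Cs. A \<subseteq> J C}. X C)"
proof -
  have "(\<Sum>R\<in>Pow A. (-1::real) powi (int (card R) - 1) * Y R)
          = (\<Sum>R\<in>Pow A. \<Sum>C\<in>Cs. (-1) powi (int (card R) - 1) * (syndrome_D R (J C) * X C))"
    using system by (intro sum.cong refl) (simp add: sum_distrib_left)
  also have "\<dots> = (\<Sum>C\<in>Cs. (\<Sum>R\<in>Pow A. (-1) powi (int (card R) - 1) * syndrome_D R (J C)) * X C)"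
    by (subst sum.swap) (simp add: sum_distrib_right mult.assoc)
  also have "\<dots> = (\<Sum>C\<in>Cs. 2 ^ (card A - 1) * (if A \<subseteq> J C then X C else 0))"
    by (intro sum.cong refl) (simp add: sum_Pow_alternating_syndrome_D assms(2,3))
  also have "\<dots> = 2 ^ (card A - 1) * (\<Sum>C\<in>{C\<in>Cs. A \<subseteq> J C}. X C)"
    by (simp add: sum.inter_filter assms(1) flip: sum_distrib_left)
  finally show ?thesis .
qed

theorem lemma16:
  fixes m :: nat
    and Cs :: "'c set"       \<comment> \<open>nontrivial syndrome classes C*\<close>
    and C0 :: 'c             \<comment> \<open>trivial class\<close>
    and J :: "'c \<Rightarrow> nat set"
    and X :: "'c \<Rightarrow> real"
    and Y :: "nat set \<Rightarrow> real"
  assumes fin: "finite Cs"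
    and C0_notin: "C0 \<notin> Cs"
    and J_C0: "J C0 = {}"
    and J_sub: "\<forall>C\<in>Cs. J C \<subseteq> {1..m}"
    and J_distinct: "inj_on J (insert C0 Cs)"
    and system: "\<forall>R \<in> (\<Union>C\<in>Cs. Pow (J C)).
                   Y R = (\<Sum>C\<in>Cs. syndrome_D R (J C) * X C)"
  shows "\<forall>C\<in>Cs. X C =
           - (\<Sum>C'\<in>{C' \<in> insert C0 Cs. J C' \<supset> J C}. X C')
           + (1 / 2 ^ (card (J C) - 1)) *
             (\<Sum>S\<in>Pow (J C). (-1::real) powi (int (card S) - 1) * Y S)"
proof
  fix C assume C: "C \<in> Cs"
  have "finite (J C)"
    using J_sub C finite_subset by blast
  moreover have "J C \<noteq> {}"
    using J_distinct C C0_notin J_C0 by (metis inj_onD insertCI)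
  moreover have "\<forall>R\<in>Pow (J C). Y R = (\<Sum>C'\<in>Cs. syndrome_D R (J C') * X C')"
    using system C by blast
  ultimately have alternating_sum:
    "(\<Sum>S\<in>Pow (J C). (-1::real) powi (int (card S) - 1) * Y S)
       = 2 ^ (card (J C) - 1) * (\<Sum>C'\<in>{C'\<in>Cs. J C \<subseteq> J C'}. X C')"
    by (rule alternating_sum_of_syndrome_system[OF fin])
  have "\<And>C'. C' \<in> Cs \<Longrightarrow> J C' = J C \<Longrightarrow> C' = C"
    using J_distinct C by (meson inj_onD insertCI)
  then have supersets: "{C'\<in>Cs. J C \<subseteq> J C'} = insert C {C' \<in> insert C0 Cs. J C' \<supset> J C}"
    using C J_C0 by auto
  have "(\<Sum>C'\<in>{C'\<in>Cs. J C \<subseteq> J C'}. X C')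
          = X C + (\<Sum>C'\<in>{C' \<in> insert C0 Cs. J C' \<supset> J C}. X C')"
    unfolding supersets using fin by (intro sum.insert) auto
  with alternating_sum show "X C =
           - (\<Sum>C'\<in>{C' \<in> insert C0 Cs. J C' \<supset> J C}. X C')
           + (1 / 2 ^ (card (J C) - 1)) *
             (\<Sum>S\<in>Pow (J C). (-1::real) powi (int (card S) - 1) * Y S)"
    by simp
qed

end
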